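(* For $e\in\mathbf{I}_n(\underline{12}0)$ define its parameters $(p,q)$ by $p=|\{k: e_1\ldots e_nk\in\mathbf{I}_{n+1}(\underline{12}0),\ k>e_n\}|=n-e_n$ and $q=|\{k: e_1\ldots e_nk\in\mathbf{I}_{n+1}(\underline{12}0),\ k\le e_n\}|$. Then the unique element of $\mathbf{I}_1(\underline{12}0)$ has parameters $(1,1)$, and for every $e\in\mathbf{I}_n(\underline{12}0)$ with parameters $(p,q)$, the multiset of parameters of the sequences $e_1\ldots e_nk\in\mathbf{I}_{n+1}(\underline{12}0)$ (over all admissible $k$) is $$\{(p,2),(p-1,3),\ldots,(1,p+1),\ (p+1,q),(p+2,q-1),\ldots,(p+q,1)\}.$$ That is, $\underline{12}0$-avoiding inversion sequences grow according to the succession rule with root $(1,1)$ and $(p,q)\leadsto (p,2),(p-1,3),\ldots,(1,p+1),(p+1,q),(p+2,q-1),\ldots,(p+q,1)$.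
   Context: An inversion sequence of length $n$ is $e=e_1\ldots e_n$ with $0\le e_i<i$; $\mathbf{I}_n$ is their set. $\mathbf{I}_n(\underline{12}0)$ is the set of $e\in\mathbf{I}_n$ with no indices $2\le i<j\le n$ such that $e_j<e_{i-1}<e_i$. *)

theory Defs
  imports Main "HOL-Library.Multiset"
begin

text \<open>Inversion sequences are represented as lists of naturals, 0-indexed:
  the paper's e_i is the list entry e ! (i - 1).  The condition 0 \<le> e_i < i
  becomes e ! j < j + 1.\<close>

definition inv_seq :: "nat list \<Rightarrow> bool" where
  "inv_seq e \<longleftrightarrow> (\<forall>j < length e. e ! j < j + 1)"

text \<open>Avoidance of the vincular pattern 120 (underlined 12): no indices
  2 \<le> i < j \<le> n with e_j < e_(i-1) < e_i.  In 0-indexed positions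
  i' = i - 1, j' = j - 1 this reads 1 \<le> i' < j' < n.\<close>

definition avoids_120 :: "nat list \<Rightarrow> bool" where
  "avoids_120 e \<longleftrightarrow>
     \<not> (\<exists>i j. 1 \<le> i \<and> i < j \<and> j < length e \<and>
              e ! j < e ! (i - 1) \<and> e ! (i - 1) < e ! i)"

definition I120 :: "nat \<Rightarrow> nat list set" where
  "I120 n = {e. length e = n \<and> inv_seq e \<and> avoids_120 e}"

definition par_p :: "nat list \<Rightarrow> nat" where
  "par_p e = card {k. e @ [k] \<in> I120 (length e + 1) \<and> k > last e}"

definition par_q :: "nat list \<Rightarrow> nat" where
  "par_q e = card {k. e @ [k] \<in> I120 (length e + 1) \<and> k \<le> last e}"

definition params :: "nat list \<Rightarrow> nat \<times> nat" where
  "params e = (par_p e, par_q e)"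

end

theory Submission
  imports Defs
begin

text \<open>Appending k to e creates an occurrence of 120 exactly when k lies below the
  bottom e_i of some ascent e_i < e_(i+1) of e.  So the admissible k form the interval
  [m, n], where m is the largest ascent bottom (0 if there is none).  Since e itself avoids
  120, every ascent bottom is at most last e, hence p = n - last e and q = last e + 1 - m.
  Appending k > last e makes last e the new largest ascent bottom, giving the children
  (p, 2), ..., (1, p + 1); appending k \<le> last e keeps m, giving (p + 1, q), ..., (p + q, 1).\<close>

definition ascent_bottoms :: "nat list \<Rightarrow> nat set" where
  "ascent_bottoms e = {e ! i | i. Suc i < length e \<and> e ! i < e ! Suc i}"

definition max_ascent_bottom :: "nat list \<Rightarrow> nat" where
  "max_ascent_bottom e = Max (insert 0 (ascent_bottoms e))"

lemma inv_seq_snoc_iff: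
  assumes "inv_seq e"
  shows "inv_seq (e @ [k]) \<longleftrightarrow> k \<le> length e"
  using assms unfolding inv_seq_def
  by (auto simp: nth_append less_Suc_eq dest: spec[of _ "length e"])

lemma avoids_120_snoc_iff:
  assumes av: "avoids_120 e"
  shows "avoids_120 (e @ [k]) \<longleftrightarrow> (\<forall>b \<in> ascent_bottoms e. b \<le> k)"
proof
  assume av_snoc: "avoids_120 (e @ [k])"
  show "\<forall>b \<in> ascent_bottoms e. b \<le> k"
  proof (rule ballI, rule ccontr)
    fix b assume "b \<in> ascent_bottoms e" "\<not> b \<le> k"
    then obtain i where "Suc i < length e" "e ! i < e ! Suc i" "k < e ! i"
      unfolding ascent_bottoms_def by auto
    then have "1 \<le> Suc i \<and> Suc i < length e \<and> length e < length (e @ [k]) \<and>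
        (e @ [k]) ! length e < (e @ [k]) ! (Suc i - 1) \<and>
        (e @ [k]) ! (Suc i - 1) < (e @ [k]) ! Suc i"
      by (simp add: nth_append)
    then show False
      using av_snoc unfolding avoids_120_def by blast
  qed
next
  assume bottoms_le: "\<forall>b \<in> ascent_bottoms e. b \<le> k"
  show "avoids_120 (e @ [k])"
    unfolding avoids_120_def
  proof clarify
    fix i j
    assume ij: "1 \<le> i" "i < j" "j < length (e @ [k])"
      and pattern: "(e @ [k]) ! j < (e @ [k]) ! (i - 1)" "(e @ [k]) ! (i - 1) < (e @ [k]) ! i"
    show False
    proof (cases "j < length e")
      case True
      then have "i - 1 < length e" "i < length e" using ij by simp_all
      with True pattern have "e ! j < e ! (i - 1)" "e ! (i - 1) < e ! i"
        by (simp_all add: nth_append)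
      with True ij show False
        using av unfolding avoids_120_def by blast
    next
      case False
      then have "j = length e" "i - 1 < length e" "i < length e" using ij by simp_all
      with pattern have "e ! (i - 1) < e ! i" "k < e ! (i - 1)"
        by (simp_all add: nth_append)
      with ij \<open>i < length e\<close> have "e ! (i - 1) \<in> ascent_bottoms e" "k < e ! (i - 1)"
        unfolding ascent_bottoms_def by (auto intro!: exI[of _ "i - 1"])
      then show False using bottoms_le by fastforce
    qed
  qed
qed

lemma finite_ascent_bottoms: "finite (ascent_bottoms e)"
proof -
  have "ascent_bottoms e \<subseteq> (!) e ` {..<length e}"
    unfolding ascent_bottoms_def by auto
  then show ?thesis by (rule finite_subset) simp
qed

lemma max_ascent_bottom_le_iff:
  "max_ascent_bottom e \<le> k \<longleftrightarrow> (\<forall>b \<in> ascent_bottoms e. b \<le> k)"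
  unfolding max_ascent_bottom_def using finite_ascent_bottoms by simp

lemma snoc_in_I120_iff:
  assumes "e \<in> I120 n"
  shows "e @ [k] \<in> I120 (Suc n) \<longleftrightarrow> max_ascent_bottom e \<le> k \<and> k \<le> n"
  using assms inv_seq_snoc_iff avoids_120_snoc_iff max_ascent_bottom_le_iff
  unfolding I120_def by auto

lemma admissible_extensions:
  assumes "e \<in> I120 n"
  shows "{k. e @ [k] \<in> I120 (Suc n)} = {max_ascent_bottom e..n}"
  by (simp add: set_eq_iff snoc_in_I120_iff[OF assms])

lemma max_ascent_bottom_le_last:
  assumes av: "avoids_120 e" and "e \<noteq> []"
  shows "max_ascent_bottom e \<le> last e"
  unfolding max_ascent_bottom_le_iff
proof
  define n where "n = length e"
  have last: "last e = e ! (n - 1)" and "n \<ge> 1"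
    using \<open>e \<noteq> []\<close> by (auto simp: n_def last_conv_nth Suc_le_eq)
  fix b assume "b \<in> ascent_bottoms e"
  then obtain i where i: "Suc i < n" "e ! i < e ! Suc i" "b = e ! i"
    unfolding ascent_bottoms_def n_def by auto
  show "b \<le> last e"
  proof (cases "Suc i = n - 1")
    case True
    with i last show ?thesis by simp
  next
    case False
    then have "1 \<le> Suc i \<and> Suc i < n - 1 \<and> n - 1 < length e \<and> e ! (Suc i - 1) < e ! Suc i"
      using i \<open>n \<ge> 1\<close> by (simp add: n_def) linarith
    then have "\<not> e ! (n - 1) < e ! i"
      using av unfolding avoids_120_def by fastforce
    with i last show ?thesis by simp
  qed
qed

lemma ascent_bottoms_snoc:
  assumes "e \<noteq> []"
  shows "ascent_bottoms (e @ [k]) =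
    (if last e < k then insert (last e) (ascent_bottoms e) else ascent_bottoms e)"
proof (intro set_eqI iffI)
  fix b assume "b \<in> ascent_bottoms (e @ [k])"
  then obtain i where i: "i < length e" "(e @ [k]) ! i < (e @ [k]) ! Suc i" "b = (e @ [k]) ! i"
    unfolding ascent_bottoms_def by auto
  show "b \<in> (if last e < k then insert (last e) (ascent_bottoms e) else ascent_bottoms e)"
  proof (cases "Suc i = length e")
    case True
    then have "last e = e ! i" by (metis assms diff_Suc_1 last_conv_nth)
    with True i have "b = last e" "last e < k" by (auto simp: nth_append)
    then show ?thesis by simp
  next
    case False
    with i have "b \<in> ascent_bottoms e"
      unfolding ascent_bottoms_def by (auto simp: nth_append)
    then show ?thesis by simp
  qed
next
  fix b assume "b \<in> (if last e < k then insert (last e) (ascent_bottoms e) else ascent_bottoms e)"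
  then consider "b \<in> ascent_bottoms e" | "last e < k" "b = last e"
    by (auto split: if_splits)
  then show "b \<in> ascent_bottoms (e @ [k])"
  proof cases
    case 1
    then show ?thesis unfolding ascent_bottoms_def by (force simp: nth_append)
  next
    case 2
    then show ?thesis using assms unfolding ascent_bottoms_def
      by (auto simp: nth_append last_conv_nth intro!: exI[of _ "length e - 1"])
  qed
qed

lemma max_ascent_bottom_snoc:
  assumes "e \<noteq> []" "max_ascent_bottom e \<le> last e"
  shows "max_ascent_bottom (e @ [k]) = (if last e < k then last e else max_ascent_bottom e)"
proof (cases "last e < k")
  case True
  have "\<forall>b \<in> ascent_bottoms e. b \<le> last e"
    using assms(2) max_ascent_bottom_le_iff by blast
  with True show ?thesis
    using finite_ascent_bottoms
    unfolding max_ascent_bottom_def ascent_bottoms_snoc[OF assms(1)]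
    by (auto intro!: Max_eqI)
next
  case False
  then show ?thesis
    unfolding max_ascent_bottom_def ascent_bottoms_snoc[OF assms(1)] by simp
qed

lemma I120_last_bounds:
  assumes e: "e \<in> I120 n" and "e \<noteq> []"
  shows "max_ascent_bottom e \<le> last e" "last e < n"
proof -
  have "avoids_120 e" using e by (simp add: I120_def)
  then show "max_ascent_bottom e \<le> last e"
    using \<open>e \<noteq> []\<close> by (rule max_ascent_bottom_le_last)
  show "last e < n"
    using e \<open>e \<noteq> []\<close> unfolding I120_def inv_seq_def
    by (auto simp: last_conv_nth dest: spec[of _ "n - 1"])
qed

lemma
  assumes e: "e \<in> I120 n" and "e \<noteq> []"
  shows par_p_eq: "par_p e = n - last e"
    and par_q_eq: "par_q e = Suc (last e) - max_ascent_bottom e"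
proof -
  have len: "length e = n" using e by (simp add: I120_def)
  note bounds = I120_last_bounds[OF e \<open>e \<noteq> []\<close>]
  have "{k. e @ [k] \<in> I120 (length e + 1) \<and> k > last e} = {Suc (last e)..n}"
    using bounds unfolding len by (auto simp: snoc_in_I120_iff[OF e])
  then show "par_p e = n - last e" unfolding par_p_def by simp
  have "{k. e @ [k] \<in> I120 (length e + 1) \<and> k \<le> last e} = {max_ascent_bottom e..last e}"
    using bounds unfolding len by (auto simp: snoc_in_I120_iff[OF e])
  then show "par_q e = Suc (last e) - max_ascent_bottom e" unfolding par_q_def by simp
qed

lemma params_snoc:
  assumes e: "e \<in> I120 n" and "e \<noteq> []" and k: "e @ [k] \<in> I120 (Suc n)"
  shows "params (e @ [k]) =
    (Suc n - k, Suc k - (if last e < k then last e else max_ascent_bottom e))"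
proof -
  have "max_ascent_bottom (e @ [k]) = (if last e < k then last e else max_ascent_bottom e)"
    using max_ascent_bottom_snoc \<open>e \<noteq> []\<close> I120_last_bounds(1)[OF e \<open>e \<noteq> []\<close>]
    by blast
  then show ?thesis
    using par_p_eq[OF k] par_q_eq[OF k] unfolding params_def by simp
qed

lemma upt_eq_map_add: "[m..<n] = map (\<lambda>i. m + i) [0..<n - m]"
  by (rule nth_equalityI) auto

lemma rev_upt_eq_map_diff: "rev [m..<Suc n] = map (\<lambda>i. n - i) [0..<Suc n - m]"
  by (rule nth_equalityI) (auto simp: rev_nth simp del: upt_Suc)

lemma mset_map_children_params:
  fixes m l n :: nat
  assumes "m \<le> l" "l < n"
  defines "f \<equiv> \<lambda>k. (Suc n - k, Suc k - (if l < k then l else m))"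
  shows "mset (map f [m..<Suc n]) =
    mset ([(n - l - i, 2 + i). i \<leftarrow> [0..<n - l]] @
          [(n - l + 1 + i, Suc l - m - i). i \<leftarrow> [0..<Suc l - m]])"
proof -
  have split: "[m..<Suc n] = [m..<Suc l] @ [Suc l..<Suc n]"
    using upt_add_eq_append[of m "Suc l" "n - l"] assms by simp
  have above: "map f [Suc l..<Suc n] = [(n - l - i, 2 + i). i \<leftarrow> [0..<n - l]]"
    unfolding upt_eq_map_add[of "Suc l"] f_def by simp
  have "map f (rev [m..<Suc l]) = map (\<lambda>i. f (l - i)) [0..<Suc l - m]"
    by (simp add: rev_upt_eq_map_diff del: upt_Suc)
  also have "\<dots> = [(n - l + 1 + i, Suc l - m - i). i \<leftarrow> [0..<Suc l - m]]"
    using assms by (intro map_cong) (auto simp: f_def)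
  finally have below: "map f (rev [m..<Suc l]) = \<dots>" .
  have "mset (map f [m..<Suc n]) = mset (map f (rev [m..<Suc l])) + mset (map f [Suc l..<Suc n])"
    unfolding split by simp
  then show ?thesis unfolding above below by (simp add: union_commute)
qed

lemma I120_1: "I120 1 = {[0]}"
proof (intro set_eqI iffI)
  fix e :: "nat list" assume "e \<in> I120 1"
  then have "length e = 1" "e ! 0 < 1" unfolding I120_def inv_seq_def by auto
  then show "e \<in> {[0]}" by (cases e) auto
next
  fix e :: "nat list" assume "e \<in> {[0]}"
  then show "e \<in> I120 1" unfolding I120_def inv_seq_def avoids_120_def by auto
qed

lemma params_singleton: "params [0] = (1, 1)"
proof -
  have "[0] \<in> I120 1" unfolding I120_1 by simp
  moreover have "max_ascent_bottom [0] = 0"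
    unfolding max_ascent_bottom_def ascent_bottoms_def by simp
  ultimately show ?thesis
    using par_p_eq[of "[0]" 1] par_q_eq[of "[0]" 1] by (simp add: params_def)
qed

lemma image_mset_params_snoc:
  assumes e: "e \<in> I120 n" and "e \<noteq> []"
  shows "image_mset (\<lambda>k. params (e @ [k])) (mset_set {k. e @ [k] \<in> I120 (Suc n)}) =
    mset ([(par_p e - i, 2 + i). i \<leftarrow> [0..<par_p e]]
          @ [(par_p e + 1 + i, par_q e - i). i \<leftarrow> [0..<par_q e]])"
proof -
  define f where "f = (\<lambda>k. (Suc n - k, Suc k - (if last e < k then last e else max_ascent_bottom e)))"
  have "image_mset (\<lambda>k. params (e @ [k])) (mset_set {k. e @ [k] \<in> I120 (Suc n)}) =
      image_mset f (mset_set {max_ascent_bottom e..n})"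
    unfolding admissible_extensions[OF e]
    by (rule image_mset_cong) (simp add: f_def params_snoc[OF e \<open>e \<noteq> []\<close>] snoc_in_I120_iff[OF e])
  also have "\<dots> = mset (map f [max_ascent_bottom e..<Suc n])"
    by (simp only: mset_map mset_upt atLeastLessThanSuc_atLeastAtMost)
  also have "\<dots> = mset ([(par_p e - i, 2 + i). i \<leftarrow> [0..<par_p e]]
      @ [(par_p e + 1 + i, par_q e - i). i \<leftarrow> [0..<par_q e]])"
    unfolding par_p_eq[OF e \<open>e \<noteq> []\<close>] par_q_eq[OF e \<open>e \<noteq> []\<close>] f_def
    using I120_last_bounds[OF e \<open>e \<noteq> []\<close>] by (rule mset_map_children_params)
  finally show ?thesis .
qed

theorem proposition3p3:
  shows "I120 1 = {[0]} \<and> params [0] = (1, 1) \<and>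
    (\<forall>n \<ge> 1. \<forall>e \<in> I120 n.
       par_p e = n - last e \<and>
       image_mset (\<lambda>k. params (e @ [k])) (mset_set {k. e @ [k] \<in> I120 (n + 1)})
         = mset ([(par_p e - i, 2 + i). i \<leftarrow> [0..<par_p e]]
                 @ [(par_p e + 1 + i, par_q e - i). i \<leftarrow> [0..<par_q e]]))"
proof (intro conjI allI impI ballI)
  show "I120 1 = {[0]}" by (rule I120_1)
  show "params [0] = (1, 1)" by (rule params_singleton)
next
  fix n e assume "1 \<le> n" and e: "e \<in> I120 n"
  then have "e \<noteq> []" unfolding I120_def by auto
  with e show "par_p e = n - last e" by (rule par_p_eq)
  show "image_mset (\<lambda>k. params (e @ [k])) (mset_set {k. e @ [k] \<in> I120 (n + 1)})
      = mset ([(par_p e - i, 2 + i). i \<leftarrow> [0..<par_p e]]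
              @ [(par_p e + 1 + i, par_q e - i). i \<leftarrow> [0..<par_q e]])"
    using image_mset_params_snoc[OF e \<open>e \<noteq> []\<close>] by (simp only: Suc_eq_plus1)
qed

end
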